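(* Let $X$ be an ultradiscrete ballean and $n\ge2$. Then the $n$-th power $X^n$ is not normal, but the hypersymmetric power $[X]^{\le n}$ is normal.
   Context: A ballean is a pair $(X,\mathcal E_X)$ where $X$ is a set and $\mathcal E_X$ is a family of subsets of $X\times X$ (entourages) such that: each $E\in\mathcal E_X$ contains the diagonal $\Delta_X$; for any $E,F\in\mathcal E_X$ there is $D\in\mathcal E_X$ with $E\circ F^{-1}\subset D$; and $\bigcup\mathcal E_X=X\times X$. For $E\in\mathcal E_X$, $x\in X$, $A\subset X$: $E[x]=\{y:(x,y)\in E\}$, $E[A]=\bigcup_{a\in A}E[a]$. $B\subset X$ is bounded if $B\subset E[x]$ for some $E\in\mathcal E_X$, $x\in X$; $\mathcal B_X$ is the family of bounded sets. Sets $A,B$ are asymptotically disjoint if $E[A]\cap E[B]\in\mathcal B_X$ for all $E\in\mathcal E_X$; $U$ is an asymptotic neighborhood of $A$ if $E[A]\setminus U\in\mathcal B_X$ for all $E$; $X$ is normal if any two asymptotically disjoint sets have disjoint asymptotic neighborhoods, and ultranormal if it contains no two unbounded asymptotically disjoint sets. $X$ is discrete if $X$ is unbounded and for every $E\in\mathcal E_X$ there is a bounded $B_E$ with $E[x]=\{x\}$ for $x\in X\setminus B_E$; ultradiscrete = discrete and ultranormal. The power $X^n$ has entourages $\{(x,y)\in X^n\times X^n:(x(i),y(i))\in E_i\ \forall i\}$ with $E_i\in\mathcal E_X$. The hyperballean $[X]^{\mathcal B}$ is the set $\mathcal B_X\setminus\{\emptyset\}$ with entourages $\hat E=\{(A,B):A\subset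 E[B],\ B\subset E[A]\}$, $E\in\mathcal E_X$; the hypersymmetric power $[X]^{\le n}$ is its subballean $\{A\in[X]^{\mathcal B}:|A|\le n\}$ (a subballean of $(Z,\mathcal E_Z)$ on $Y\subset Z$ has entourages $(Y\times Y)\cap E$, $E\in\mathcal E_Z$). *)

theory Defs
  imports Main "HOL-Library.FuncSet"
begin

definition ballean :: "'a set \<Rightarrow> ('a \<times> 'a) set set \<Rightarrow> bool" where
  "ballean X EE \<longleftrightarrow>
     (\<forall>E\<in>EE. Id_on X \<subseteq> E \<and> E \<subseteq> X \<times> X) \<and>
     (\<forall>E\<in>EE. \<forall>F\<in>EE. \<exists>D\<in>EE. E O converse F \<subseteq> D) \<and>
     \<Union>EE = X \<times> X"

definition bounded_in :: "'a set \<Rightarrow> ('a \<times> 'a) set set \<Rightarrow> 'a set \<Rightarrow> bool" where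
  "bounded_in X EE B \<longleftrightarrow> (\<exists>E\<in>EE. \<exists>x\<in>X. B \<subseteq> E `` {x})"

definition asymp_disjoint :: "'a set \<Rightarrow> ('a \<times> 'a) set set \<Rightarrow> 'a set \<Rightarrow> 'a set \<Rightarrow> bool" where
  "asymp_disjoint X EE A B \<longleftrightarrow> (\<forall>E\<in>EE. bounded_in X EE (E `` A \<inter> E `` B))"

definition asymp_nbhd :: "'a set \<Rightarrow> ('a \<times> 'a) set set \<Rightarrow> 'a set \<Rightarrow> 'a set \<Rightarrow> bool" where
  "asymp_nbhd X EE U A \<longleftrightarrow> (\<forall>E\<in>EE. bounded_in X EE (E `` A - U))"

definition normal_ballean :: "'a set \<Rightarrow> ('a \<times> 'a) set set \<Rightarrow> bool" where
  "normal_ballean X EE \<longleftrightarrow>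
     (\<forall>A B. A \<subseteq> X \<longrightarrow> B \<subseteq> X \<longrightarrow> asymp_disjoint X EE A B \<longrightarrow>
        (\<exists>U V. U \<subseteq> X \<and> V \<subseteq> X \<and> asymp_nbhd X EE U A \<and> asymp_nbhd X EE V B \<and> U \<inter> V = {}))"

definition ultranormal :: "'a set \<Rightarrow> ('a \<times> 'a) set set \<Rightarrow> bool" where
  "ultranormal X EE \<longleftrightarrow>
     \<not> (\<exists>A B. A \<subseteq> X \<and> B \<subseteq> X \<and> \<not> bounded_in X EE A \<and> \<not> bounded_in X EE B \<and>
            asymp_disjoint X EE A B)"

definition discrete_ballean :: "'a set \<Rightarrow> ('a \<times> 'a) set set \<Rightarrow> bool" where
  "discrete_ballean X EE \<longleftrightarrow> \<not> bounded_in X EE X \<and>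
     (\<forall>E\<in>EE. \<exists>B. bounded_in X EE B \<and> (\<forall>x\<in>X - B. E `` {x} = {x}))"

definition ultradiscrete :: "'a set \<Rightarrow> ('a \<times> 'a) set set \<Rightarrow> bool" where
  "ultradiscrete X EE \<longleftrightarrow> discrete_ballean X EE \<and> ultranormal X EE"

definition power_carrier :: "'a set \<Rightarrow> nat \<Rightarrow> (nat \<Rightarrow> 'a) set" where
  "power_carrier X n = PiE {..<n} (\<lambda>_. X)"

definition power_ent :: "'a set \<Rightarrow> ('a \<times> 'a) set set \<Rightarrow> nat \<Rightarrow> ((nat \<Rightarrow> 'a) \<times> (nat \<Rightarrow> 'a)) set set" where
  "power_ent X EE n =
     {{(x, y). x \<in> power_carrier X n \<and> y \<in> power_carrier X n \<and> (\<forall>i<n. (x i, y i) \<in> Es i)}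
       | Es. \<forall>i<n. Es i \<in> EE}"

definition hyper_carrier :: "'a set \<Rightarrow> ('a \<times> 'a) set set \<Rightarrow> 'a set set" where
  "hyper_carrier X EE = {A. bounded_in X EE A \<and> A \<noteq> {}}"

definition hyper_ent :: "'a set \<Rightarrow> ('a \<times> 'a) set set \<Rightarrow> ('a set \<times> 'a set) set set" where
  "hyper_ent X EE =
     (\<lambda>E. {(A, B). A \<in> hyper_carrier X EE \<and> B \<in> hyper_carrier X EE \<and>
                   A \<subseteq> E `` B \<and> B \<subseteq> E `` A}) ` EE"

definition sub_ent :: "'b set \<Rightarrow> ('b \<times> 'b) set set \<Rightarrow> ('b \<times> 'b) set set" where
  "sub_ent Y EE = (\<lambda>E. (Y \<times> Y) \<inter> E) ` EE"

definition hypersym_carrier :: "'a set \<Rightarrow> ('a \<times> 'a) set set \<Rightarrow> nat \<Rightarrow> 'a set set" where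
  "hypersym_carrier X EE n = {A \<in> hyper_carrier X EE. finite A \<and> card A \<le> n}"

definition hypersym_ent :: "'a set \<Rightarrow> ('a \<times> 'a) set set \<Rightarrow> nat \<Rightarrow> ('a set \<times> 'a set) set set" where
  "hypersym_ent X EE n = sub_ent (hypersym_carrier X EE n) (hyper_ent X EE)"

end

theory Submission
  imports Defs
begin

text \<open>In an ultradiscrete ballean the sets with bounded complement form an ultrafilter, and every
  entourage is trivial off a bounded set. The basic tool is Katetov's lemma: a fixed-point-free
  map moves this ultrafilter, i.e.\ it sends some unbounded set into a bounded one; it is proved
  with a proper 3-colouring of the map.

  In \<open>X\<^sup>n\<close> the two axes through a point, \<open>{(t, a, a, \<dots>)}\<close> and \<open>{(a, t, a, \<dots>)}\<close>, are
  asymptotically disjoint. If \<open>U\<close> and \<open>V\<close> were asymptotic neighbourhoods of them, then for each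
  \<open>x\<close> the point \<open>(x, s, a, \<dots>)\<close> lies in \<open>V\<close> for all \<open>s\<close> outside a bounded set \<open>r x\<close>. Choosing
  \<open>h x \<notin> r x \<union> {x}\<close>, Katetov's lemma gives an unbounded \<open>Z\<close> with \<open>h ` Z\<close> bounded, and then
  \<open>(t, h t, a, \<dots>)\<close> also lies in \<open>U\<close> for all but boundedly many \<open>t \<in> Z\<close>; so \<open>U\<close> and \<open>V\<close> meet.

  In \<open>[X]\<^sup>\<le>\<^sup>n\<close>, if two asymptotically disjoint families both had non-singleton members with
  unbounded union, iterating Katetov's lemma (the shadow lemma) would give a bounded \<open>K\<close> and
  unboundedly many points \<open>y\<close> with a member \<open>A\<close> of the first and \<open>B\<close> of the second family satisfying
  \<open>A - K = {y} = B - K\<close>; such \<open>A\<close> and \<open>B\<close> are close, a contradiction. If the non-singleton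
  members of \<open>\<B>\<close> have bounded union, then \<open>\<B>\<close> and its complement are disjoint asymptotic
  neighbourhoods of \<open>\<B>\<close> and \<open>\<A>\<close>, because a singleton far out is close only to itself.\<close>

section \<open>Proper 3-colourings of fixed-point-free maps\<close>

text \<open>The domain is required to be closed under \<open>g\<close>: then two colourings with disjoint domains
  can be united, since \<open>x\<close> and \<open>g x\<close> always lie in the same one.\<close>

definition partial_colouring :: "('a \<Rightarrow> 'a) \<Rightarrow> ('a \<times> nat) set \<Rightarrow> bool" where
  "partial_colouring g R \<longleftrightarrow> single_valued R \<and> Range R \<subseteq> {..<3} \<and> g ` Domain R \<subseteq> Domain R \<and>
     (\<forall>x i j. (x, i) \<in> R \<longrightarrow> (g x, j) \<in> R \<longrightarrow> i \<noteq> j)"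

lemma partial_colouringD:
  assumes "partial_colouring g R"
  shows "single_valued R" "Range R \<subseteq> {..<3}" "\<And>x. x \<in> Domain R \<Longrightarrow> g x \<in> Domain R"
    "\<And>x i j. (x, i) \<in> R \<Longrightarrow> (g x, j) \<in> R \<Longrightarrow> i \<noteq> j"
  using assms unfolding partial_colouring_def by blast+

lemma partial_colouringI:
  assumes "single_valued R" "Range R \<subseteq> {..<3}" "\<And>x. x \<in> Domain R \<Longrightarrow> g x \<in> Domain R"
    "\<And>x i j. (x, i) \<in> R \<Longrightarrow> (g x, j) \<in> R \<Longrightarrow> i \<noteq> j"
  shows "partial_colouring g R"
  using assms unfolding partial_colouring_def by blast

lemma partial_colouring_Union_chain:
  assumes "C \<in> chains {R. partial_colouring g R}"
  shows "partial_colouring g (\<Union>C)"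
proof -
  have col: "partial_colouring g R" if "R \<in> C" for R
    using that chainsD2[OF assms] by blast
  have common: "\<exists>R\<in>C. p \<in> R \<and> q \<in> R" if "p \<in> \<Union>C" "q \<in> \<Union>C" for p q
  proof -
    from that obtain R1 R2 where "R1 \<in> C" "p \<in> R1" "R2 \<in> C" "q \<in> R2" by blast
    with chainsD[OF assms, of R1 R2] show ?thesis by blast
  qed
  show ?thesis
  proof (rule partial_colouringI)
    show "single_valued (\<Union>C)"
    proof (rule single_valuedI)
      fix x i j assume "(x, i) \<in> \<Union>C" "(x, j) \<in> \<Union>C"
      with common obtain R where "R \<in> C" "(x, i) \<in> R" "(x, j) \<in> R" by blast
      then show "i = j" using partial_colouringD(1)[OF col] single_valuedD by metis
    qed
  next
    fix x i j assume "(x, i) \<in> \<Union>C" "(g x, j) \<in> \<Union>C"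
    with common obtain R where "R \<in> C" "(x, i) \<in> R" "(g x, j) \<in> R" by blast
    then show "i \<noteq> j" using partial_colouringD(4)[OF col] by blast
  next
    show "Range (\<Union>C) \<subseteq> {..<3}"
    proof
      fix i assume "i \<in> Range (\<Union>C)"
      then obtain R where "R \<in> C" "i \<in> Range R" by blast
      then show "i \<in> {..<3}" using partial_colouringD(2)[OF col] by blast
    qed
    show "g x \<in> Domain (\<Union>C)" if "x \<in> Domain (\<Union>C)" for x
    proof -
      from that obtain R where "R \<in> C" "x \<in> Domain R" by blast
      then show ?thesis using partial_colouringD(3)[OF col] by blast
    qed
  qed
qed

lemma partial_colouring_Un:
  assumes R: "partial_colouring g R" and S: "partial_colouring g S"
    and disj: "Domain R \<inter> Domain S = {}"
  shows "partial_colouring g (R \<union> S)"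
proof (rule partial_colouringI)
  have same_part: "(x, i) \<in> R \<and> (y, j) \<in> R \<or> (x, i) \<in> S \<and> (y, j) \<in> S"
    if "(x, i) \<in> R \<union> S" "(y, j) \<in> R \<union> S" "x \<in> Domain R \<longleftrightarrow> y \<in> Domain R" for x i y j
    using that disj by (auto intro: DomainI)
  show "single_valued (R \<union> S)"
  proof (rule single_valuedI)
    fix x i j assume "(x, i) \<in> R \<union> S" "(x, j) \<in> R \<union> S"
    from same_part[OF this] show "i = j"
      using partial_colouringD(1)[OF R] partial_colouringD(1)[OF S] by (auto dest: single_valuedD)
  qed
  fix x i j assume xi: "(x, i) \<in> R \<union> S" and gx: "(g x, j) \<in> R \<union> S"
  have "x \<in> Domain R \<longleftrightarrow> g x \<in> Domain R"
    using xi disj partial_colouringD(3)[OF R] partial_colouringD(3)[OF S] by blast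
  from same_part[OF xi gx this] show "i \<noteq> j"
    using partial_colouringD(4)[OF R] partial_colouringD(4)[OF S] by blast
next
  show "Range (R \<union> S) \<subseteq> {..<3}" using partial_colouringD(2)[OF R] partial_colouringD(2)[OF S] by auto
  show "g x \<in> Domain (R \<union> S)" if "x \<in> Domain (R \<union> S)" for x
    using that partial_colouringD(3)[OF R] partial_colouringD(3)[OF S] by blast
qed

lemma partial_colouring_insert:
  assumes R: "partial_colouring g R" and x: "x \<notin> Domain R" and gx: "(g x, j) \<in> R"
    and k: "k < 3" "k \<noteq> j"
  shows "partial_colouring g (insert (x, k) R)"
proof (rule partial_colouringI)
  note sv = partial_colouringD(1)[OF R] and closed = partial_colouringD(3)[OF R]
  show "single_valued (insert (x, k) R)"
    using sv x by (auto intro!: single_valuedI dest: single_valuedD)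
  fix y i i' assume yi: "(y, i) \<in> insert (x, k) R" and gy: "(g y, i') \<in> insert (x, k) R"
  show "i \<noteq> i'"
  proof (cases "y = x")
    case True
    with gx gy x have "(g x, i') \<in> R" by auto
    with gx sv have "i' = j" by (auto dest: single_valuedD)
    with True x yi k show ?thesis by auto
  next
    case False
    with yi have yR: "(y, i) \<in> R" by blast
    then have "g y \<in> Domain R" by (blast intro: closed)
    with x gy have "(g y, i') \<in> R" by auto
    with yR partial_colouringD(4)[OF R] show ?thesis by blast
  qed
next
  show "Range (insert (x, k) R) \<subseteq> {..<3}" using partial_colouringD(2)[OF R] k by auto
  show "g y \<in> Domain (insert (x, k) R)" if "y \<in> Domain (insert (x, k) R)" for y
    using that partial_colouringD(3)[OF R] gx by blast
qed

lemma injective_orbit_colouring: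
  assumes inj: "inj (\<lambda>k. (g ^^ k) x)"
  shows "partial_colouring g ((\<lambda>k. ((g ^^ k) x, k mod 2)) ` UNIV)"
    (is "partial_colouring g ?S")
proof (rule partial_colouringI)
  have orbit_eq: "k = k'" if "(g ^^ k) x = (g ^^ k') x" for k k'
    using inj that by (auto dest: injD)
  show "single_valued ?S" by (auto intro!: single_valuedI dest: orbit_eq)
  show "Range ?S \<subseteq> {..<3}" by auto
  show "g y \<in> Domain ?S" if "y \<in> Domain ?S" for y
  proof -
    from that obtain k where "y = (g ^^ k) x" by auto
    then have "g y = (g ^^ Suc k) x" by simp
    then show ?thesis by blast
  qed
  show "i \<noteq> j" if "(y, i) \<in> ?S" "(g y, j) \<in> ?S" for y i j
  proof -
    from that obtain k k' where "y = (g ^^ k) x" "i = k mod 2" "g y = (g ^^ k') x" "j = k' mod 2"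
      by auto
    moreover from this have "k' = Suc k" by (auto intro: orbit_eq)
    ultimately show ?thesis by (simp add: mod_Suc)
  qed
qed

lemma least_period_inj_on:
  assumes l: "(g ^^ l) y = y" and least: "\<And>m. 0 < m \<Longrightarrow> m < l \<Longrightarrow> (g ^^ m) y \<noteq> y"
  shows "inj_on (\<lambda>k. (g ^^ k) y) {..<l}"
proof -
  have "(g ^^ u) y \<noteq> (g ^^ v) y" if "u < v" "v < l" for u v
  proof
    assume eq: "(g ^^ u) y = (g ^^ v) y"
    have "(g ^^ (l - v + u)) y = (g ^^ (l - v)) ((g ^^ u) y)" by (simp add: funpow_add)
    also have "\<dots> = (g ^^ (l - v + v)) y" using eq by (simp add: funpow_add)
    also have "\<dots> = y" using that l by simp
    finally have "(g ^^ (l - v + u)) y = y" .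
    moreover have "0 < l - v + u" "l - v + u < l" using that by auto
    ultimately show False using least[of "l - v + u"] by auto
  qed
  then show ?thesis unfolding inj_on_def by (metis lessThan_iff linorder_neqE_nat)
qed

definition cycle_colour :: "nat \<Rightarrow> nat \<Rightarrow> nat" where
  "cycle_colour l k = (if odd l \<and> k = l - 1 then 2 else k mod 2)"

lemma periodic_orbit_colouring:
  assumes fp: "\<And>x. g x \<noteq> x" and l: "0 < l" "(g ^^ l) y = y"
    and least: "\<And>m. 0 < m \<Longrightarrow> m < l \<Longrightarrow> (g ^^ m) y \<noteq> y"
  shows "partial_colouring g ((\<lambda>k. ((g ^^ k) y, cycle_colour l k)) ` {..<l})"
    (is "partial_colouring g ?S")
proof (rule partial_colouringI)
  have "l \<noteq> 1" using l fp[of y] by auto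
  with l have l2: "2 \<le> l" by simp
  have orbit_eq: "u = v" if "(g ^^ u) y = (g ^^ v) y" "u < l" "v < l" for u v
    using least_period_inj_on[OF l(2) least] that by (auto dest: inj_onD)
  have step: "g ((g ^^ k) y) = (g ^^ (if Suc k = l then 0 else Suc k)) y" for k
  proof (cases "Suc k = l")
    case True
    have "g ((g ^^ k) y) = (g ^^ l) y" using True[symmetric] by simp
    with True l(2) show ?thesis by simp
  qed simp
  have in_S: "((g ^^ m) y, cycle_colour l m) \<in> ?S" if "m < l" for m
    using that by (intro rev_image_eqI) auto
  show "single_valued ?S"
  proof (rule single_valuedI)
    fix z i j assume "(z, i) \<in> ?S" "(z, j) \<in> ?S"
    then obtain k k' where "k < l" "k' < l" "z = (g ^^ k) y" "z = (g ^^ k') y"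
      "i = cycle_colour l k" "j = cycle_colour l k'"
      by auto
    then show "i = j" using orbit_eq by metis
  qed
  show "Range ?S \<subseteq> {..<3}" by (auto simp: cycle_colour_def)
  show "g z \<in> Domain ?S" if "z \<in> Domain ?S" for z
  proof -
    from that obtain k where k: "k < l" "z = (g ^^ k) y" by auto
    let ?k' = "if Suc k = l then 0 else Suc k"
    have "?k' < l" using k l by auto
    then have "((g ^^ ?k') y, cycle_colour l ?k') \<in> ?S" by (rule in_S)
    then have "(g z, cycle_colour l ?k') \<in> ?S" using step[of k] k by simp
    then show ?thesis by (rule DomainI)
  qed
  show "i \<noteq> j" if "(z, i) \<in> ?S" "(g z, j) \<in> ?S" for z i j
  proof -
    from that obtain k k' where k: "k < l" "z = (g ^^ k) y" "i = cycle_colour l k"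
      and k': "k' < l" "g z = (g ^^ k') y" "j = cycle_colour l k'"
      by auto
    from k k' step[of k] l have "k' = (if Suc k = l then 0 else Suc k)"
      by (intro orbit_eq) auto
    then show ?thesis
      unfolding k(3) k'(3) cycle_colour_def using k(1) l2 by (auto simp: mod_Suc)
  qed
qed

lemma orbit_colouring:
  assumes fp: "\<And>x. g x \<noteq> x"
  obtains S where "partial_colouring g S" "S \<noteq> {}" "Domain S \<subseteq> range (\<lambda>k. (g ^^ k) x)"
proof (cases "inj (\<lambda>k. (g ^^ k) x)")
  case True
  show ?thesis by (rule that[OF injective_orbit_colouring[OF True]]) auto
next
  case False
  then obtain a b where "a < b" "(g ^^ a) x = (g ^^ b) x"
    unfolding inj_def by (metis linorder_neqE_nat)
  define y where "y = (g ^^ a) x"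
  have "(g ^^ (b - a)) y = y"
    using \<open>a < b\<close> \<open>(g ^^ a) x = (g ^^ b) x\<close> unfolding y_def
    by (metis funpow_add le_add_diff_inverse2 less_imp_le_nat comp_apply)
  then have periodic: "\<exists>l. 0 < l \<and> (g ^^ l) y = y" using \<open>a < b\<close> by (intro exI[of _ "b - a"]) auto
  define l where "l = (LEAST l. 0 < l \<and> (g ^^ l) y = y)"
  have l: "0 < l" "(g ^^ l) y = y" using LeastI_ex[OF periodic] unfolding l_def by auto
  have least: "(g ^^ m) y \<noteq> y" if "0 < m" "m < l" for m
    using not_less_Least that unfolding l_def by blast
  let ?S = "(\<lambda>k. ((g ^^ k) y, cycle_colour l k)) ` {..<l}"
  have "Domain ?S \<subseteq> range (\<lambda>k. (g ^^ k) x)"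
  proof
    fix z assume "z \<in> Domain ?S"
    then obtain k where "z = (g ^^ k) y" by auto
    then have "z = (g ^^ (k + a)) x" unfolding y_def by (simp add: funpow_add)
    then show "z \<in> range (\<lambda>k. (g ^^ k) x)" by blast
  qed
  moreover have "?S \<noteq> {}" using l by auto
  ultimately show ?thesis using that periodic_orbit_colouring[OF fp l least] by blast
qed

lemma maximal_partial_colouring_total:
  assumes fp: "\<And>x. g x \<noteq> x" and M: "partial_colouring g M"
    and maximal: "\<And>R. partial_colouring g R \<Longrightarrow> M \<subseteq> R \<Longrightarrow> R = M"
  shows "x \<in> Domain M"
proof (rule ccontr)
  assume x: "x \<notin> Domain M"
  consider (edge) z j where "z \<notin> Domain M" "(g z, j) \<in> M"
    | (closed) "\<And>z. z \<notin> Domain M \<Longrightarrow> g z \<notin> Domain M"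
    by blast
  then show False
  proof cases
    case edge
    let ?k = "if j = 0 then 1 else 0 :: nat"
    have "partial_colouring g (insert (z, ?k) M)"
      using partial_colouring_insert[OF M edge] by simp
    with maximal edge(1) show False by blast
  next
    case closed
    \<comment> \<open>the uncoloured points contain the forward orbit of \<open>x\<close>, which can be coloured separately\<close>
    have orbit: "(g ^^ k) x \<notin> Domain M" for k
      by (induction k) (simp_all add: x closed)
    obtain S where S: "partial_colouring g S" "S \<noteq> {}" "Domain S \<subseteq> range (\<lambda>k. (g ^^ k) x)"
      using orbit_colouring[OF fp] .
    have disj: "Domain M \<inter> Domain S = {}" using S(3) orbit by blast
    with maximal partial_colouring_Un[OF M S(1) disj] have "S \<subseteq> M" by blast
    moreover from S(2) obtain z i where "(z, i) \<in> S" by auto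
    ultimately show False using disj by blast
  qed
qed

theorem fixed_point_free_3_colouring:
  assumes fp: "\<And>x. g x \<noteq> x"
  obtains c :: "'a \<Rightarrow> nat" where "\<And>x. c x < 3" "\<And>x. c (g x) \<noteq> c x"
proof -
  obtain M where M: "partial_colouring g M"
    and maximal: "\<And>R. partial_colouring g R \<Longrightarrow> M \<subseteq> R \<Longrightarrow> R = M"
    using Zorn_Lemma[of "{R. partial_colouring g R}"] partial_colouring_Union_chain by blast
  have "\<forall>x. \<exists>i. (x, i) \<in> M" using maximal_partial_colouring_total[OF fp M maximal] by blast
  then obtain c where c: "\<And>x. (x, c x) \<in> M" by metis
  show thesis
  proof
    show "c x < 3" for x using c[of x] partial_colouringD(2)[OF M] by blast
    show "c (g x) \<noteq> c x" for x using partial_colouringD(4)[OF M c[of x] c[of "g x"]] by simp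
  qed
qed

section \<open>Balleans\<close>

lemma bounded_in_subset: "bounded_in X EE B \<Longrightarrow> A \<subseteq> B \<Longrightarrow> bounded_in X EE A"
  unfolding bounded_in_def by blast

lemma asymp_disjoint_commute: "asymp_disjoint X EE A B \<longleftrightarrow> asymp_disjoint X EE B A"
  unfolding asymp_disjoint_def by (simp add: Int_commute)

lemma asymp_nbhd_complement:
  assumes "\<And>E. E \<in> F \<Longrightarrow> E \<subseteq> Y \<times> Y \<and> Id_on B \<subseteq> E" "asymp_disjoint Y F A B"
  shows "asymp_nbhd Y F (Y - B) A"
  unfolding asymp_nbhd_def
proof
  fix E assume "E \<in> F"
  with assms(1) have "E `` A - (Y - B) \<subseteq> E `` A \<inter> E `` B" by blast
  with assms(2) \<open>E \<in> F\<close> show "bounded_in Y F (E `` A - (Y - B))"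
    unfolding asymp_disjoint_def using bounded_in_subset by blast
qed

locale ballean_space =
  fixes X :: "'a set" and EE :: "('a \<times> 'a) set set"
  assumes ballean: "ballean X EE"
begin

abbreviation bounded :: "'a set \<Rightarrow> bool" where
  "bounded \<equiv> bounded_in X EE"

lemma entourage_subset: "E \<in> EE \<Longrightarrow> E \<subseteq> X \<times> X"
  using conjunct1[OF ballean[unfolded ballean_def]] by blast

lemma entourage_refl: "E \<in> EE \<Longrightarrow> x \<in> X \<Longrightarrow> (x, x) \<in> E"
  using conjunct1[OF ballean[unfolded ballean_def]] by blast

lemma entourage_relcomp_converse:
  "E \<in> EE \<Longrightarrow> F \<in> EE \<Longrightarrow> \<exists>D\<in>EE. E O converse F \<subseteq> D"
  using conjunct1[OF conjunct2[OF ballean[unfolded ballean_def]]] by blast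

lemma entourage_cover: "x \<in> X \<Longrightarrow> y \<in> X \<Longrightarrow> \<exists>E\<in>EE. (x, y) \<in> E"
  using conjunct2[OF conjunct2[OF ballean[unfolded ballean_def]]] by blast

lemma entourage_converse:
  assumes E: "E \<in> EE"
  obtains D where "D \<in> EE" "converse E \<subseteq> D"
proof -
  obtain D where D: "D \<in> EE" "E O converse E \<subseteq> D"
    using entourage_relcomp_converse[OF E E] by blast
  have "converse E \<subseteq> E O converse E"
  proof
    fix p assume p: "p \<in> converse E"
    then obtain a c where ac: "p = (a, c)" "(c, a) \<in> E" by auto
    then have "a \<in> X" using entourage_subset[OF E] by blast
    with ac show "p \<in> E O converse E" using entourage_refl[OF E] by blast
  qed
  with D that show thesis by blast
qed

lemma entourage_relcomp:
  assumes E: "E \<in> EE" and F: "F \<in> EE"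
  obtains D where "D \<in> EE" "E O F \<subseteq> D"
proof -
  obtain G where G: "G \<in> EE" "converse F \<subseteq> G" using entourage_converse[OF F] .
  obtain D where D: "D \<in> EE" "E O converse G \<subseteq> D"
    using entourage_relcomp_converse[OF E G(1)] by blast
  from G(2) have "E O F \<subseteq> E O converse G" by blast
  with D that show thesis by blast
qed

lemma entourage_Un:
  assumes E: "E \<in> EE" and F: "F \<in> EE"
  obtains D where "D \<in> EE" "E \<union> F \<subseteq> D"
proof -
  obtain D where D: "D \<in> EE" "E O F \<subseteq> D" using entourage_relcomp[OF E F] .
  have "E \<subseteq> E O F"
  proof
    fix p assume p: "p \<in> E"
    then obtain a c where ac: "p = (a, c)" "c \<in> X" using entourage_subset[OF E] by blast
    with p show "p \<in> E O F" using entourage_refl[OF F] by blast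
  qed
  moreover have "F \<subseteq> E O F"
  proof
    fix p assume p: "p \<in> F"
    then obtain a c where ac: "p = (a, c)" "a \<in> X" using entourage_subset[OF F] by blast
    with p show "p \<in> E O F" using entourage_refl[OF E] by blast
  qed
  ultimately show thesis using D that by blast
qed

lemma bounded_subset_carrier: "bounded B \<Longrightarrow> B \<subseteq> X"
  unfolding bounded_in_def using entourage_subset by fast

lemma bounded_singleton:
  assumes "x \<in> X" shows "bounded {x}"
proof -
  obtain E where "E \<in> EE" "(x, x) \<in> E" using entourage_cover[OF assms assms] by blast
  with assms show ?thesis unfolding bounded_in_def by blast
qed

lemma bounded_Image:
  assumes A: "bounded A" and E: "E \<in> EE"
  shows "bounded (E `` A)"
proof -
  obtain F x where F: "F \<in> EE" "x \<in> X" "A \<subseteq> F `` {x}"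
    using A unfolding bounded_in_def by blast
  obtain D where D: "D \<in> EE" "F O E \<subseteq> D" using entourage_relcomp[OF F(1) E] .
  have "E `` A \<subseteq> D `` {x}"
  proof
    fix z assume "z \<in> E `` A"
    then obtain a where "a \<in> A" "(a, z) \<in> E" by blast
    with F(3) have "(x, z) \<in> F O E" by blast
    with D(2) show "z \<in> D `` {x}" by blast
  qed
  with D(1) F(2) show ?thesis unfolding bounded_in_def by blast
qed

lemma bounded_Un:
  assumes A: "bounded A" and B: "bounded B"
  shows "bounded (A \<union> B)"
proof -
  obtain E x where E: "E \<in> EE" "x \<in> X" "A \<subseteq> E `` {x}" using A unfolding bounded_in_def by blast
  obtain F y where F: "F \<in> EE" "y \<in> X" "B \<subseteq> F `` {y}" using B unfolding bounded_in_def by blast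
  obtain G where G: "G \<in> EE" "(x, y) \<in> G" using entourage_cover[OF E(2) F(2)] by blast
  obtain D1 where D1: "D1 \<in> EE" "G O F \<subseteq> D1" using entourage_relcomp[OF G(1) F(1)] .
  obtain D where D: "D \<in> EE" "E \<union> D1 \<subseteq> D" using entourage_Un[OF E(1) D1(1)] .
  have "A \<subseteq> D `` {x}" using E(3) D(2) by blast
  moreover have "B \<subseteq> D `` {x}"
  proof
    fix z assume "z \<in> B"
    with F(3) G(2) have "(x, z) \<in> G O F" by blast
    with D1(2) D(2) show "z \<in> D `` {x}" by blast
  qed
  ultimately have "A \<union> B \<subseteq> D `` {x}" by blast
  with D(1) E(2) show ?thesis unfolding bounded_in_def by blast
qed

lemma bounded_UN:
  assumes "x \<in> X" "finite I" "\<And>i. i \<in> I \<Longrightarrow> bounded (B i)"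
  shows "bounded (\<Union>i\<in>I. B i)"
  using assms(2,3)
proof (induction I rule: finite_induct)
  case empty
  then show ?case using bounded_in_subset[OF bounded_singleton[OF assms(1)]] by simp
qed (simp add: bounded_Un)

lemma unbounded_Diff: "\<not> bounded A \<Longrightarrow> bounded K \<Longrightarrow> \<not> bounded (A - K)"
  using bounded_Un[of "A - K" K] bounded_in_subset[of X EE "A - K \<union> K" A] by blast

lemma bounded_entourage:
  assumes K: "bounded K"
  obtains E where "E \<in> EE" "Id_on X \<union> K \<times> K \<subseteq> E"
proof -
  obtain F x where F: "F \<in> EE" "x \<in> X" "K \<subseteq> F `` {x}" using K unfolding bounded_in_def by blast
  obtain G where G: "G \<in> EE" "converse F \<subseteq> G" using entourage_converse[OF F(1)] .
  obtain D where D: "D \<in> EE" "G O F \<subseteq> D" using entourage_relcomp[OF G(1) F(1)] .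
  have "K \<times> K \<subseteq> D"
  proof clarify
    fix u v assume "u \<in> K" "v \<in> K"
    with F(3) have "(x, u) \<in> F" "(x, v) \<in> F" by blast+
    with G(2) have "(u, v) \<in> G O F" by blast
    with D(2) show "(u, v) \<in> D" by blast
  qed
  moreover have "Id_on X \<subseteq> D" using entourage_refl[OF D(1)] by blast
  ultimately show thesis using D(1) that by blast
qed

end

section \<open>Ultradiscrete balleans\<close>

locale ultradiscrete_space = ballean_space +
  assumes ultradiscrete: "ultradiscrete X EE"
begin

lemma carrier_unbounded: "\<not> bounded X"
  using ultradiscrete unfolding ultradiscrete_def discrete_ballean_def by (elim conjE)

lemma entourage_eventually_trivial:
  "E \<in> EE \<Longrightarrow> \<exists>B. bounded B \<and> (\<forall>x\<in>X - B. E `` {x} = {x})"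
  using ultradiscrete unfolding ultradiscrete_def discrete_ballean_def by (elim conjE) (rule bspec)

lemma asymp_disjoint_bounded:
  "A \<subseteq> X \<Longrightarrow> B \<subseteq> X \<Longrightarrow> asymp_disjoint X EE A B \<Longrightarrow> bounded A \<or> bounded B"
  using ultradiscrete unfolding ultradiscrete_def ultranormal_def by blast

lemma carrier_nonempty: "X \<noteq> {}"
proof
  assume X: "X = {}"
  then have unbounded: "\<not> bounded B" for B unfolding bounded_in_def by blast
  show False
  proof (cases "EE = {}")
    case True
    then have "asymp_disjoint X EE {} {}" unfolding asymp_disjoint_def by blast
    with unbounded show False using asymp_disjoint_bounded by blast
  next
    case False
    then obtain E where "E \<in> EE" by blast
    with unbounded show False using entourage_eventually_trivial by blast
  qed
qed

lemma bounded_empty: "bounded {}"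
  using carrier_nonempty bounded_singleton bounded_in_subset by blast

lemma exists_outside_bounded:
  assumes "bounded K" obtains x where "x \<in> X" "x \<notin> K"
  using assms carrier_unbounded bounded_in_subset by blast

lemma entourage_trivial_off_bounded:
  assumes E: "E \<in> EE"
  obtains K where "bounded K" "E \<subseteq> Id_on X \<union> K \<times> K"
proof -
  obtain B where B: "bounded B" "\<And>x. x \<in> X - B \<Longrightarrow> E `` {x} = {x}"
    using entourage_eventually_trivial[OF E] by blast
  have "E \<subseteq> Id_on X \<union> (B \<union> E `` B) \<times> (B \<union> E `` B)"
  proof clarify
    fix x y assume xy: "(x, y) \<in> E" "(x, y) \<notin> Id_on X"
    have "x \<in> X" using xy(1) entourage_subset[OF E] by blast
    have "x \<in> B"
    proof (rule ccontr)
      assume "x \<notin> B"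
      with B(2) \<open>x \<in> X\<close> have "E `` {x} = {x}" by blast
      with xy(1) have "y = x" by blast
      with xy(2) \<open>x \<in> X\<close> show False by (blast intro: Id_onI)
    qed
    with xy(1) show "x \<in> B \<union> E `` B \<and> y \<in> B \<union> E `` B" by blast
  qed
  moreover have "bounded (B \<union> E `` B)" using B(1) bounded_Image[OF B(1) E] by (rule bounded_Un)
  ultimately show thesis using that by blast
qed

lemma bounded_or_bounded_complement:
  assumes "A \<subseteq> X" shows "bounded A \<or> bounded (X - A)"
proof -
  have "asymp_disjoint X EE A (X - A)"
    unfolding asymp_disjoint_def
  proof
    fix E assume "E \<in> EE"
    then obtain K where K: "bounded K" "E \<subseteq> Id_on X \<union> K \<times> K"
      by (rule entourage_trivial_off_bounded)
    then have "E `` A \<inter> E `` (X - A) \<subseteq> K" by blast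
    with K(1) show "bounded (E `` A \<inter> E `` (X - A))" by (rule bounded_in_subset)
  qed
  with assms show ?thesis using asymp_disjoint_bounded by blast
qed

lemma unbounded_Int:
  assumes "A \<subseteq> X" "B \<subseteq> X" "\<not> bounded A" "\<not> bounded B"
  shows "\<not> bounded (A \<inter> B)"
proof
  assume "bounded (A \<inter> B)"
  moreover have "bounded (X - A)" "bounded (X - B)"
    using assms bounded_or_bounded_complement by blast+
  ultimately have "bounded ((A \<inter> B) \<union> (X - A) \<union> (X - B))" by (intro bounded_Un)
  moreover have "X \<subseteq> (A \<inter> B) \<union> (X - A) \<union> (X - B)" by blast
  ultimately show False using carrier_unbounded bounded_in_subset by blast
qed

text \<open>Katetov's lemma: a fixed-point-free map cannot fix the ultrafilter of sets with bounded
  complement. A proper 3-colouring of the map splits \<open>W\<close> into three pieces, each disjoint from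
  its image; one piece \<open>Z\<close> is unbounded, so its complement, which contains \<open>h ` Z\<close>, is bounded.\<close>

lemma katetov:
  assumes W: "W \<subseteq> X" "\<not> bounded W" and h: "\<And>x. x \<in> W \<Longrightarrow> h x \<in> X \<and> h x \<noteq> x"
  obtains Z where "Z \<subseteq> W" "\<not> bounded Z" "bounded (h ` Z)"
proof -
  obtain x1 where x1: "x1 \<in> X" using carrier_nonempty by blast
  obtain x2 where x2: "x2 \<in> X" "x2 \<notin> {x1}"
    using exists_outside_bounded[OF bounded_singleton[OF x1]] .
  \<comment> \<open>the colouring lemma needs a fixed-point-free map on the whole type\<close>
  define g where "g x = (if x \<in> W then h x else if x = x1 then x2 else x1)" for x
  have fp: "g x \<noteq> x" for x unfolding g_def using h x2 by auto
  obtain c :: "'a \<Rightarrow> nat" where c: "\<And>x. c x < 3" "\<And>x. c (g x) \<noteq> c x"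
    using fixed_point_free_3_colouring[OF fp] by blast
  define Z where "Z i = {x \<in> W. c x = i}" for i
  have "W \<subseteq> Z 0 \<union> Z 1 \<union> Z 2"
  proof
    fix x assume "x \<in> W"
    moreover have "c x = 0 \<or> c x = 1 \<or> c x = 2" using c(1)[of x] by linarith
    ultimately show "x \<in> Z 0 \<union> Z 1 \<union> Z 2" unfolding Z_def by blast
  qed
  then obtain i where i: "\<not> bounded (Z i)"
    using W(2) bounded_Un bounded_in_subset by metis
  have "Z i \<subseteq> X" using W(1) unfolding Z_def by blast
  then have "bounded (X - Z i)" using i bounded_or_bounded_complement by blast
  moreover have "h ` Z i \<subseteq> X - Z i"
  proof
    fix y assume "y \<in> h ` Z i"
    then obtain x where x: "x \<in> W" "c x = i" "y = h x" unfolding Z_def by blast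
    then have "c y \<noteq> i" using c(2)[of x] unfolding g_def by simp
    with x h show "y \<in> X - Z i" unfolding Z_def by auto
  qed
  ultimately have "bounded (h ` Z i)" by (rule bounded_in_subset)
  moreover have "Z i \<subseteq> W" unfolding Z_def by blast
  ultimately show thesis using i that by blast
qed

end

section \<open>Powers\<close>

lemma power_carrier_fun_upd:
  "x \<in> power_carrier X n \<Longrightarrow> i < n \<Longrightarrow> t \<in> X \<Longrightarrow> x(i := t) \<in> power_carrier X n"
  unfolding power_carrier_def by (metis PiE_fun_upd insert_absorb lessThan_iff)

lemma power_carrier_coord: "x \<in> power_carrier X n \<Longrightarrow> i < n \<Longrightarrow> x i \<in> X"
  unfolding power_carrier_def by auto

lemma power_entourageI:
  "(\<And>i. i < n \<Longrightarrow> Es i \<in> EE) \<Longrightarrow>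
   {(x, y). x \<in> power_carrier X n \<and> y \<in> power_carrier X n \<and> (\<forall>i<n. (x i, y i) \<in> Es i)}
     \<in> power_ent X EE n"
  unfolding power_ent_def by blast

context ballean_space
begin

abbreviation power_bounded :: "nat \<Rightarrow> (nat \<Rightarrow> 'a) set \<Rightarrow> bool" where
  "power_bounded n \<equiv> bounded_in (power_carrier X n) (power_ent X EE n)"

lemma power_entourage_of_bounded:
  assumes "bounded K"
  shows "\<exists>E\<in>power_ent X EE n. \<forall>x\<in>power_carrier X n. \<forall>y\<in>power_carrier X n.
    (\<forall>i<n. x i = y i \<or> x i \<in> K \<and> y i \<in> K) \<longrightarrow> (x, y) \<in> E"
proof -
  obtain D where D: "D \<in> EE" "Id_on X \<union> K \<times> K \<subseteq> D" using bounded_entourage[OF assms] .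
  let ?E = "{(x, y). x \<in> power_carrier X n \<and> y \<in> power_carrier X n \<and> (\<forall>i<n. (x i, y i) \<in> D)}"
  have "(x, y) \<in> ?E" if xy: "x \<in> power_carrier X n" "y \<in> power_carrier X n"
    and close: "\<forall>i<n. x i = y i \<or> x i \<in> K \<and> y i \<in> K" for x y
  proof -
    have "(x i, y i) \<in> D" if "i < n" for i
    proof -
      have "x i = y i \<or> x i \<in> K \<and> y i \<in> K" using close that by blast
      with power_carrier_coord[OF xy(1) that] D(2) show ?thesis by (auto intro: Id_onI)
    qed
    with xy show ?thesis by blast
  qed
  moreover have "?E \<in> power_ent X EE n" using D(1) by (intro power_entourageI)
  ultimately show ?thesis by blast
qed

lemma power_bounded_coords:
  assumes n: "0 < n" and S: "power_bounded n S"
  shows "\<exists>M. bounded M \<and> (\<forall>z\<in>S. \<forall>i<n. z i \<in> M)"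
proof -
  obtain E x0 where E: "E \<in> power_ent X EE n" "x0 \<in> power_carrier X n" "S \<subseteq> E `` {x0}"
    using S unfolding bounded_in_def by blast
  obtain Es where Es: "\<forall>i<n. Es i \<in> EE"
    "E = {(x, y). x \<in> power_carrier X n \<and> y \<in> power_carrier X n \<and> (\<forall>i<n. (x i, y i) \<in> Es i)}"
    using E(1) unfolding power_ent_def by blast
  let ?M = "\<Union>i<n. Es i `` {x0 i}"
  have "bounded ?M"
    using power_carrier_coord[OF E(2)] n Es(1)
    by (intro bounded_UN) (auto intro: bounded_Image bounded_singleton)
  moreover have "\<forall>z\<in>S. \<forall>i<n. z i \<in> ?M"
    using E(3) Es(2) by blast
  ultimately show ?thesis by blast
qed

lemma power_boundedI:
  assumes n: "0 < n" and c: "c \<in> power_carrier X n" and S: "S \<subseteq> power_carrier X n"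
    and M: "bounded M" "\<And>z i. z \<in> S \<Longrightarrow> i < n \<Longrightarrow> z i \<in> M"
  shows "power_bounded n S"
proof -
  let ?K = "M \<union> (\<Union>i<n. {c i})"
  have "bounded ?K"
    using power_carrier_coord[OF c] n M(1)
    by (intro bounded_Un bounded_UN) (auto intro: bounded_singleton)
  then obtain E where E: "E \<in> power_ent X EE n"
    "\<forall>x\<in>power_carrier X n. \<forall>y\<in>power_carrier X n.
       (\<forall>i<n. x i = y i \<or> x i \<in> ?K \<and> y i \<in> ?K) \<longrightarrow> (x, y) \<in> E"
    using power_entourage_of_bounded by blast
  have "S \<subseteq> E `` {c}"
  proof
    fix z assume "z \<in> S"
    with S M(2) have "\<forall>i<n. c i = z i \<or> c i \<in> ?K \<and> z i \<in> ?K" by blast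
    with c S \<open>z \<in> S\<close> E(2) have "(c, z) \<in> E" by blast
    then show "z \<in> E `` {c}" by blast
  qed
  with E(1) c show ?thesis unfolding bounded_in_def by blast
qed

lemma axes_asymp_disjoint:
  assumes c: "c \<in> power_carrier X n" and ij: "i < n" "j < n" "i \<noteq> j"
  shows "asymp_disjoint (power_carrier X n) (power_ent X EE n)
           ((\<lambda>t. c(i := t)) ` X) ((\<lambda>t. c(j := t)) ` X)"
  unfolding asymp_disjoint_def
proof
  fix E assume "E \<in> power_ent X EE n"
  then obtain Es where Es: "\<forall>k<n. Es k \<in> EE"
    "E = {(x, y). x \<in> power_carrier X n \<and> y \<in> power_carrier X n \<and> (\<forall>k<n. (x k, y k) \<in> Es k)}"
    unfolding power_ent_def by blast
  let ?M = "\<Union>k<n. Es k `` {c k}"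
  have "bounded ?M"
    using power_carrier_coord[OF c] ij(1) Es(1)
    by (intro bounded_UN) (auto intro: bounded_Image bounded_singleton)
  moreover have "z k \<in> ?M"
    if "z \<in> E `` ((\<lambda>t. c(i := t)) ` X) \<inter> E `` ((\<lambda>t. c(j := t)) ` X)" "k < n" for z k
  proof -
    \<comment> \<open>every coordinate of \<open>z\<close> is controlled by \<open>c\<close> through one of the two axes\<close>
    from that(1) obtain s t where "(c(i := s), z) \<in> E" "(c(j := t), z) \<in> E" by blast
    then have "((c(i := s)) k, z k) \<in> Es k" "((c(j := t)) k, z k) \<in> Es k"
      using Es(2) \<open>k < n\<close> by blast+
    with ij(3) have "(c k, z k) \<in> Es k" by (cases "k = i") auto
    with \<open>k < n\<close> show ?thesis by blast
  qed
  moreover have "E `` ((\<lambda>t. c(i := t)) ` X) \<inter> E `` ((\<lambda>t. c(j := t)) ` X) \<subseteq> power_carrier X n"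
    using Es(2) by blast
  ultimately show "power_bounded n (E `` ((\<lambda>t. c(i := t)) ` X) \<inter> E `` ((\<lambda>t. c(j := t)) ` X))"
    using c ij(1) by (intro power_boundedI[where M = ?M]) auto
qed

lemma axis_asymp_nbhd:
  assumes c: "c \<in> power_carrier X n" and ij: "i < n" "j < n" "i \<noteq> j"
    and U: "asymp_nbhd (power_carrier X n) (power_ent X EE n) U ((\<lambda>t. c(i := t)) ` X)"
    and L: "bounded L"
  shows "\<exists>M. bounded M \<and> (\<forall>t\<in>X - M. \<forall>y\<in>L. c(i := t, j := y) \<in> U)"
proof -
  have "bounded (L \<union> {c j})"
    using L power_carrier_coord[OF c ij(2)] by (intro bounded_Un bounded_singleton)
  then obtain E where E: "E \<in> power_ent X EE n"
    "\<forall>x\<in>power_carrier X n. \<forall>y\<in>power_carrier X n.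
       (\<forall>k<n. x k = y k \<or> x k \<in> L \<union> {c j} \<and> y k \<in> L \<union> {c j}) \<longrightarrow> (x, y) \<in> E"
    using power_entourage_of_bounded by blast
  from U E(1) have "power_bounded n (E `` ((\<lambda>t. c(i := t)) ` X) - U)"
    unfolding asymp_nbhd_def by blast
  moreover have "0 < n" using ij(1) by simp
  ultimately obtain M where M: "bounded M"
    "\<forall>z\<in>E `` ((\<lambda>t. c(i := t)) ` X) - U. \<forall>k<n. z k \<in> M"
    using power_bounded_coords by blast
  have "c(i := t, j := y) \<in> U" if t: "t \<in> X - M" and y: "y \<in> L" for t y
  proof -
    \<comment> \<open>moving the \<open>j\<close>-th coordinate inside the bounded set \<open>L \<union> {c j}\<close> is an \<open>E\<close>-step\<close>
    have "y \<in> X" using y bounded_subset_carrier[OF L] by blast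
    have "c(i := t) \<in> power_carrier X n" using c ij(1) t by (intro power_carrier_fun_upd) auto
    moreover have "c(i := t, j := y) \<in> power_carrier X n"
      using calculation ij(2) \<open>y \<in> X\<close> by (rule power_carrier_fun_upd)
    moreover have "\<forall>k<n. (c(i := t)) k = (c(i := t, j := y)) k \<or>
        (c(i := t)) k \<in> L \<union> {c j} \<and> (c(i := t, j := y)) k \<in> L \<union> {c j}"
      using ij(3) y by auto
    ultimately have "(c(i := t), c(i := t, j := y)) \<in> E" using E(2) by blast
    moreover have "c(i := t) \<in> (\<lambda>t. c(i := t)) ` X" using t by blast
    ultimately have "c(i := t, j := y) \<in> E `` ((\<lambda>t. c(i := t)) ` X)" by blast
    moreover have "(c(i := t, j := y)) i \<notin> M" using t ij(3) by simp
    ultimately show ?thesis using M(2) ij(1) by blast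
  qed
  with M(1) show ?thesis by blast
qed

end

context ultradiscrete_space
begin

lemma axes_nbhds_intersect:
  assumes c: "c \<in> power_carrier X n" and ij: "i < n" "j < n" "i \<noteq> j"
    and U: "asymp_nbhd (power_carrier X n) (power_ent X EE n) U ((\<lambda>t. c(i := t)) ` X)"
    and V: "asymp_nbhd (power_carrier X n) (power_ent X EE n) V ((\<lambda>t. c(j := t)) ` X)"
  shows "U \<inter> V \<noteq> {}"
proof -
  have "\<exists>M. bounded M \<and> (\<forall>s\<in>X - M. c(i := x, j := s) \<in> V)" if x: "x \<in> X" for x
  proof -
    have "\<exists>M. bounded M \<and> (\<forall>s\<in>X - M. \<forall>y\<in>{x}. c(j := s, i := y) \<in> V)"
      using ij by (intro axis_asymp_nbhd[OF c _ _ _ V bounded_singleton[OF x]]) auto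
    then show ?thesis using ij(3) by (auto simp: fun_upd_twist)
  qed
  then obtain r where r: "\<And>x. x \<in> X \<Longrightarrow> bounded (r x)"
    "\<And>x s. x \<in> X \<Longrightarrow> s \<in> X - r x \<Longrightarrow> c(i := x, j := s) \<in> V"
    by metis
  have "\<forall>x\<in>X. \<exists>s. s \<in> X \<and> s \<notin> r x \<and> s \<noteq> x"
  proof
    fix x assume x: "x \<in> X"
    show "\<exists>s. s \<in> X \<and> s \<notin> r x \<and> s \<noteq> x"
      using exists_outside_bounded[OF bounded_Un[OF r(1)[OF x] bounded_singleton[OF x]]] by blast
  qed
  then obtain h where h: "\<forall>x\<in>X. h x \<in> X \<and> h x \<notin> r x \<and> h x \<noteq> x"
    by (auto dest!: bchoice)
  \<comment> \<open>Katetov makes the second coordinates \<open>h t\<close> range over a bounded set, so that for most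
    \<open>t\<close> the point \<open>c(i := t, j := h t)\<close> also lies in \<open>U\<close>\<close>
  obtain Z where Z: "Z \<subseteq> X" "\<not> bounded Z" "bounded (h ` Z)"
    using katetov[OF subset_refl carrier_unbounded, of h] h by blast
  have "\<exists>M. bounded M \<and> (\<forall>t\<in>X - M. \<forall>y\<in>h ` Z. c(i := t, j := y) \<in> U)"
    using ij by (intro axis_asymp_nbhd[OF c _ _ _ U Z(3)])
  then obtain M where M: "bounded M" "\<And>t y. t \<in> X - M \<Longrightarrow> y \<in> h ` Z \<Longrightarrow> c(i := t, j := y) \<in> U"
    by blast
  from Z(2) M(1) obtain t where "t \<in> Z" "t \<notin> M" using bounded_in_subset by blast
  with Z(1) M(2) r(2) h have "c(i := t, j := h t) \<in> U \<inter> V" by blast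
  then show ?thesis by blast
qed

theorem power_not_normal:
  assumes n: "2 \<le> n"
  shows "\<not> normal_ballean (power_carrier X n) (power_ent X EE n)"
proof
  assume normal: "normal_ballean (power_carrier X n) (power_ent X EE n)"
  obtain a where "a \<in> X" using carrier_nonempty by blast
  then have c: "restrict (\<lambda>_. a) {..<n} \<in> power_carrier X n" (is "?c \<in> _")
    unfolding power_carrier_def by simp
  have "(\<lambda>t. ?c(k := t)) ` X \<subseteq> power_carrier X n" if "k < n" for k
    using c that by (auto intro: power_carrier_fun_upd)
  with n have axes: "(\<lambda>t. ?c(0 := t)) ` X \<subseteq> power_carrier X n"
    "(\<lambda>t. ?c(1 := t)) ` X \<subseteq> power_carrier X n"
    by simp_all
  have "asymp_disjoint (power_carrier X n) (power_ent X EE n)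
      ((\<lambda>t. ?c(0 := t)) ` X) ((\<lambda>t. ?c(1 := t)) ` X)"
    using axes_asymp_disjoint[OF c, of 0 1] n by simp
  from normal[unfolded normal_ballean_def, rule_format, OF axes this]
  obtain U V where "asymp_nbhd (power_carrier X n) (power_ent X EE n) U ((\<lambda>t. ?c(0 := t)) ` X)"
    "asymp_nbhd (power_carrier X n) (power_ent X EE n) V ((\<lambda>t. ?c(1 := t)) ` X)" "U \<inter> V = {}"
    by blast
  with axes_nbhds_intersect[OF c, of 0 1] n show False by simp
qed

end

section \<open>Hypersymmetric powers\<close>

lemma two_le_card_iff: "finite A \<Longrightarrow> 2 \<le> card A \<longleftrightarrow> (\<exists>a\<in>A. \<exists>b\<in>A. a \<noteq> b)"
  using card_le_Suc0_iff_eq[of A] by auto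

lemma Int_nonempty_if_Diff_singleton:
  assumes "2 \<le> card A" "A - K = {y}" shows "A \<inter> K \<noteq> {}"
proof
  assume "A \<inter> K = {}"
  with assms(2) have "A = {y}" by blast
  with assms(1) show False by simp
qed

lemma card_Diff_meeting:
  assumes "finite B" "x \<in> B - K" "B - K \<noteq> {x}" "B \<inter> K \<noteq> {}"
  shows "2 \<le> card (B - K)" "card (B - K) < card B"
proof -
  show "2 \<le> card (B - K)" using assms(1-3) two_le_card_iff[of "B - K"] by blast
  show "card (B - K) < card B" using assms(1,4) by (intro psubset_card_mono) auto
qed

definition shadow :: "'a set set \<Rightarrow> 'a set \<Rightarrow> 'a set" where
  "shadow AA K = {y. \<exists>A\<in>AA. A - K = {y}}"

lemma shadow_mono: "AA \<subseteq> BB \<Longrightarrow> shadow AA K \<subseteq> shadow BB K"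
  unfolding shadow_def by blast

lemma shadow_image_Diff: "shadow ((\<lambda>A. A - K0) ` AA) K = shadow AA (K0 \<union> K)"
  unfolding shadow_def by (auto simp: Diff_Un)

definition hat_ent :: "'a set \<Rightarrow> ('a \<times> 'a) set set \<Rightarrow> ('a \<times> 'a) set \<Rightarrow> ('a set \<times> 'a set) set" where
  "hat_ent X EE E =
     {(A, B). A \<in> hyper_carrier X EE \<and> B \<in> hyper_carrier X EE \<and> A \<subseteq> E `` B \<and> B \<subseteq> E `` A}"

lemma hypersym_ent_eq:
  "hypersym_ent X EE n =
     (\<lambda>E. (hypersym_carrier X EE n \<times> hypersym_carrier X EE n) \<inter> hat_ent X EE E) ` EE"
  unfolding hypersym_ent_def sub_ent_def hyper_ent_def hat_ent_def by (simp add: image_image)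

lemma hypersym_carrier_iff:
  "C \<in> hypersym_carrier X EE n \<longleftrightarrow> bounded_in X EE C \<and> C \<noteq> {} \<and> finite C \<and> card C \<le> n"
  unfolding hypersym_carrier_def hyper_carrier_def by blast

lemma hat_entI:
  "C \<in> hypersym_carrier X EE n \<Longrightarrow> D \<in> hypersym_carrier X EE n \<Longrightarrow> C \<subseteq> E `` D \<Longrightarrow> D \<subseteq> E `` C
   \<Longrightarrow> (C, D) \<in> (hypersym_carrier X EE n \<times> hypersym_carrier X EE n) \<inter> hat_ent X EE E"
  unfolding hat_ent_def hypersym_carrier_def by blast

lemma Image_of_agree_off:
  assumes "A - K = B - K" "B \<inter> K \<noteq> {}" "A \<subseteq> X" "Id_on X \<union> K \<times> K \<subseteq> E"
  shows "A \<subseteq> E `` B"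
proof
  fix x assume x: "x \<in> A"
  show "x \<in> E `` B"
  proof (cases "x \<in> K")
    case True
    obtain b where "b \<in> B" "b \<in> K" using assms(2) by blast
    with True assms(4) show ?thesis by blast
  next
    case False
    with x assms(1) have "x \<in> B" by blast
    moreover have "(x, x) \<in> E" using x assms(3,4) by blast
    ultimately show ?thesis by blast
  qed
qed

lemma hat_ent_singleton_off:
  assumes "({b}, C) \<in> hat_ent X EE E" "E \<subseteq> Id_on X \<union> K \<times> K" "b \<notin> K"
  shows "C = {b}"
proof -
  have "C \<subseteq> E `` {b}" "C \<noteq> {}" using assms(1) unfolding hat_ent_def hyper_carrier_def by auto
  moreover have "E `` {b} \<subseteq> {b}" using assms(2,3) by blast
  ultimately show ?thesis by blast
qed

lemma hat_ent_Diff_subset: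
  assumes "(B, C) \<in> hat_ent X EE E" "E \<subseteq> Id_on X \<union> K \<times> K"
  shows "C - K \<subseteq> B"
  using assms unfolding hat_ent_def by blast

context ballean_space
begin

abbreviation hypersym_bounded :: "nat \<Rightarrow> 'a set set \<Rightarrow> bool" where
  "hypersym_bounded n \<equiv> bounded_in (hypersym_carrier X EE n) (hypersym_ent X EE n)"

lemma hypersym_carrier_subset: "C \<in> hypersym_carrier X EE n \<Longrightarrow> C \<subseteq> X"
  unfolding hypersym_carrier_iff using bounded_subset_carrier by blast

lemma hat_ent_refl:
  assumes "C \<in> hypersym_carrier X EE n" "E \<in> EE"
  shows "(C, C) \<in> (hypersym_carrier X EE n \<times> hypersym_carrier X EE n) \<inter> hat_ent X EE E"
proof -
  have "C \<subseteq> E `` C" using hypersym_carrier_subset[OF assms(1)] entourage_refl[OF assms(2)] by blast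
  with assms(1) show ?thesis by (intro hat_entI)
qed

lemma hypersym_ent_subset_refl:
  assumes "E' \<in> hypersym_ent X EE n" "BB \<subseteq> hypersym_carrier X EE n"
  shows "E' \<subseteq> hypersym_carrier X EE n \<times> hypersym_carrier X EE n \<and> Id_on BB \<subseteq> E'"
proof -
  obtain E where E: "E \<in> EE" "E' = (hypersym_carrier X EE n \<times> hypersym_carrier X EE n) \<inter> hat_ent X EE E"
    using assms(1) unfolding hypersym_ent_eq by blast
  with assms(2) hat_ent_refl[OF _ E(1)] show ?thesis by blast
qed

lemma hypersym_non_singletons:
  assumes "CC \<subseteq> hypersym_carrier X EE n"
  shows "\<forall>A\<in>{A\<in>CC. 2 \<le> card A}. finite A \<and> A \<subseteq> X \<and> 2 \<le> card A \<and> card A \<le> n"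
proof
  fix A assume "A \<in> {A \<in> CC. 2 \<le> card A}"
  with assms have "A \<in> hypersym_carrier X EE n" "2 \<le> card A" by blast+
  then show "finite A \<and> A \<subseteq> X \<and> 2 \<le> card A \<and> card A \<le> n"
    using hypersym_carrier_subset unfolding hypersym_carrier_iff by blast
qed

lemma hat_ent_agree_off:
  assumes A: "A \<in> hypersym_carrier X EE n" and B: "B \<in> hypersym_carrier X EE n"
    and "A - K = B - K" "A \<inter> K \<noteq> {}" "B \<inter> K \<noteq> {}" and E: "Id_on X \<union> K \<times> K \<subseteq> E"
  shows "(B, A) \<in> (hypersym_carrier X EE n \<times> hypersym_carrier X EE n) \<inter> hat_ent X EE E"
proof (rule hat_entI[OF B A])
  show "B \<subseteq> E `` A"
    using assms(3,4) hypersym_carrier_subset[OF B] E by (intro Image_of_agree_off) auto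
  show "A \<subseteq> E `` B"
    using assms(3,5) hypersym_carrier_subset[OF A] E by (intro Image_of_agree_off) auto
qed

lemma hypersym_bounded_Union:
  assumes "hypersym_bounded n S" shows "bounded (\<Union>S)"
proof -
  obtain E' C where E': "E' \<in> hypersym_ent X EE n" "C \<in> hypersym_carrier X EE n" "S \<subseteq> E' `` {C}"
    using assms unfolding bounded_in_def by blast
  obtain E where E: "E \<in> EE"
    "E' = (hypersym_carrier X EE n \<times> hypersym_carrier X EE n) \<inter> hat_ent X EE E"
    using E'(1) unfolding hypersym_ent_eq by blast
  have "\<Union>S \<subseteq> E `` C" using E'(3) E(2) unfolding hat_ent_def by blast
  moreover have "bounded C" using E'(2) unfolding hypersym_carrier_iff by blast
  ultimately show ?thesis using bounded_Image[OF _ E(1)] bounded_in_subset by blast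
qed

lemma hypersym_boundedI:
  assumes X: "X \<noteq> {}" and n: "1 \<le> n" and S: "S \<subseteq> hypersym_carrier X EE n"
    and U: "bounded (\<Union>S)"
  shows "hypersym_bounded n S"
proof -
  obtain C where C: "C \<in> hypersym_carrier X EE n" "S \<noteq> {} \<Longrightarrow> C \<in> S"
  proof (cases "S = {}")
    case True
    from X obtain x where "x \<in> X" by blast
    then have "{x} \<in> hypersym_carrier X EE n"
      using n bounded_singleton unfolding hypersym_carrier_iff by auto
    with True that show thesis by blast
  next
    case False
    with S that show thesis by blast
  qed
  then have "bounded C" "C \<noteq> {}" unfolding hypersym_carrier_iff by auto
  with U have "bounded (\<Union>S \<union> C)" by (intro bounded_Un)
  then obtain E where E: "E \<in> EE" "Id_on X \<union> (\<Union>S \<union> C) \<times> (\<Union>S \<union> C) \<subseteq> E"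
    by (rule bounded_entourage)
  let ?E' = "(hypersym_carrier X EE n \<times> hypersym_carrier X EE n) \<inter> hat_ent X EE E"
  have "S \<subseteq> ?E' `` {C}"
  proof
    fix D assume D: "D \<in> S"
    with S have "D \<in> hypersym_carrier X EE n" by blast
    then have "D \<noteq> {}" unfolding hypersym_carrier_iff by blast
    obtain c d where "c \<in> C" "d \<in> D" using \<open>C \<noteq> {}\<close> \<open>D \<noteq> {}\<close> by blast
    have "(u, v) \<in> E" if "u \<in> C \<union> D" "v \<in> C \<union> D" for u v using that D E(2) by blast
    then have "C \<subseteq> E `` D" "D \<subseteq> E `` C" using \<open>c \<in> C\<close> \<open>d \<in> D\<close> by blast+
    with C(1) \<open>D \<in> hypersym_carrier X EE n\<close> have "(C, D) \<in> ?E'" by (intro hat_entI)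
    then show "D \<in> ?E' `` {C}" by blast
  qed
  moreover have "?E' \<in> hypersym_ent X EE n" unfolding hypersym_ent_eq using E(1) by blast
  ultimately show ?thesis using C(1) unfolding bounded_in_def by blast
qed

end

context ultradiscrete_space
begin

lemma bounded_partners:
  assumes AA: "\<forall>A\<in>AA. finite A \<and> A \<subseteq> X \<and> 2 \<le> card A" and W: "\<not> bounded (\<Union>AA)"
  obtains Z Ax K0 where "Z \<subseteq> \<Union>AA" "\<not> bounded Z" "bounded K0" "Z \<inter> K0 = {}"
    "\<forall>x\<in>Z. Ax x \<in> AA \<and> x \<in> Ax x \<and> Ax x \<inter> K0 \<noteq> {}"
proof -
  have "\<forall>x\<in>\<Union>AA. \<exists>A y. A \<in> AA \<and> x \<in> A \<and> y \<in> A \<and> y \<noteq> x"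
  proof
    fix x assume "x \<in> \<Union>AA"
    then obtain A where A: "A \<in> AA" "x \<in> A" by blast
    with AA obtain y where "y \<in> A" "y \<noteq> x" using two_le_card_iff by metis
    with A show "\<exists>A y. A \<in> AA \<and> x \<in> A \<and> y \<in> A \<and> y \<noteq> x" by blast
  qed
  then obtain Ax h where Ax: "\<forall>x\<in>\<Union>AA. Ax x \<in> AA \<and> x \<in> Ax x \<and> h x \<in> Ax x \<and> h x \<noteq> x"
    by metis
  have "\<Union>AA \<subseteq> X" using AA by blast
  moreover from this Ax have "h x \<in> X \<and> h x \<noteq> x" if "x \<in> \<Union>AA" for x using that by blast
  ultimately obtain Z where Z: "Z \<subseteq> \<Union>AA" "\<not> bounded Z" "bounded (h ` Z)"
    using katetov[OF _ W] by blast
  have "\<not> bounded (Z - h ` Z)" using Z unbounded_Diff by blast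
  moreover have "\<forall>x\<in>Z - h ` Z. Ax x \<in> AA \<and> x \<in> Ax x \<and> Ax x \<inter> h ` Z \<noteq> {}"
    using Z(1) Ax by blast
  ultimately show thesis using that[of "Z - h ` Z" "h ` Z" Ax] Z by blast
qed

text \<open>The shadow lemma. Removing a bounded set that meets unboundedly many of the sets away
  from a chosen point of each either leaves singletons or lowers the size bound.\<close>

lemma unbounded_shadow:
  assumes "\<forall>A\<in>AA. finite A \<and> A \<subseteq> X \<and> 2 \<le> card A \<and> card A \<le> m" "\<not> bounded (\<Union>AA)"
  shows "\<exists>K. bounded K \<and> \<not> bounded (shadow AA K)"
  using assms
proof (induction m arbitrary: AA)
  case 0
  then have "AA = {}" by fastforce
  with "0.prems"(2) bounded_empty show ?case by simp
next
  case (Suc m)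
  obtain Z Ax K0 where Z: "Z \<subseteq> \<Union>AA" "\<not> bounded Z" "bounded K0" "Z \<inter> K0 = {}"
    and Ax: "\<forall>x\<in>Z. Ax x \<in> AA \<and> x \<in> Ax x \<and> Ax x \<inter> K0 \<noteq> {}"
    using bounded_partners Suc.prems by (metis (no_types, lifting))
  let ?Z1 = "{x \<in> Z. Ax x - K0 = {x}}" and ?Z2 = "{x \<in> Z. Ax x - K0 \<noteq> {x}}"
  have "Z \<subseteq> ?Z1 \<union> ?Z2" by blast
  with Z(2) consider (singletons) "\<not> bounded ?Z1" | (smaller) "\<not> bounded ?Z2"
    using bounded_Un[of ?Z1 ?Z2] bounded_in_subset[of X EE "?Z1 \<union> ?Z2" Z] by blast
  then show ?case
  proof cases
    case singletons
    have "?Z1 \<subseteq> shadow AA K0" using Ax unfolding shadow_def by blast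
    with singletons Z(3) show ?thesis using bounded_in_subset by blast
  next
    case smaller
    let ?AA2 = "(\<lambda>A. A - K0) ` (Ax ` ?Z2)"
    have "finite A \<and> A \<subseteq> X \<and> 2 \<le> card A \<and> card A \<le> m" if "A \<in> ?AA2" for A
    proof -
      from that obtain x where x: "x \<in> ?Z2" "A = Ax x - K0" by blast
      with Ax Z(4) have "x \<in> Ax x - K0" "Ax x - K0 \<noteq> {x}" "Ax x \<inter> K0 \<noteq> {}" "Ax x \<in> AA"
        by auto
      with Suc.prems(1) card_Diff_meeting[of "Ax x" x K0] show ?thesis unfolding x(2) by fastforce
    qed
    moreover have "?Z2 \<subseteq> \<Union>?AA2" using Ax Z(4) by blast
    then have "\<not> bounded (\<Union>?AA2)" using smaller bounded_in_subset by blast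
    ultimately obtain K where K: "bounded K" "\<not> bounded (shadow ?AA2 K)"
      using Suc.IH[of ?AA2] by blast
    have "shadow ?AA2 K \<subseteq> shadow AA (K0 \<union> K)"
      unfolding shadow_image_Diff using Ax by (intro shadow_mono) blast
    then have "\<not> bounded (shadow AA (K0 \<union> K))" using K(2) bounded_in_subset by blast
    moreover have "bounded (K0 \<union> K)" using Z(3) K(1) by (rule bounded_Un)
    ultimately show ?thesis by blast
  qed
qed

lemma non_singletons_bounded:
  assumes AA: "AA \<subseteq> hypersym_carrier X EE n" and BB: "BB \<subseteq> hypersym_carrier X EE n"
    and disj: "asymp_disjoint (hypersym_carrier X EE n) (hypersym_ent X EE n) AA BB"
  shows "bounded (\<Union>{A\<in>AA. 2 \<le> card A}) \<or> bounded (\<Union>{B\<in>BB. 2 \<le> card B})"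
proof (rule ccontr)
  let ?H = "hypersym_carrier X EE n"
  assume "\<not> ?thesis"
  then obtain K1 K2 where K1: "bounded K1" "\<not> bounded (shadow {A\<in>AA. 2 \<le> card A} K1)"
    and K2: "bounded K2" "\<not> bounded (shadow {B\<in>BB. 2 \<le> card B} K2)"
    using unbounded_shadow[OF hypersym_non_singletons[OF AA]]
      unbounded_shadow[OF hypersym_non_singletons[OF BB]] by blast
  let ?K = "K1 \<union> K2"
  let ?Y = "shadow {A\<in>AA. 2 \<le> card A} K1 \<inter> shadow {B\<in>BB. 2 \<le> card B} K2 - ?K"
  have "shadow {A\<in>AA. 2 \<le> card A} K1 \<subseteq> X" "shadow {B\<in>BB. 2 \<le> card B} K2 \<subseteq> X"
    using AA BB hypersym_carrier_subset unfolding shadow_def by blast+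
  with K1 K2 have Y: "\<not> bounded ?Y"
    using unbounded_Int unbounded_Diff bounded_Un[OF K1(1) K2(1)] by blast
  obtain E where E: "E \<in> EE" "Id_on X \<union> ?K \<times> ?K \<subseteq> E"
    using bounded_entourage[OF bounded_Un[OF K1(1) K2(1)]] by blast
  let ?E' = "(?H \<times> ?H) \<inter> hat_ent X EE E"
  have "?Y \<subseteq> \<Union>(?E' `` AA \<inter> ?E' `` BB)"
  proof
    fix y assume y: "y \<in> ?Y"
    then obtain A B where A: "A \<in> AA" "2 \<le> card A" "A - K1 = {y}"
      and B: "B \<in> BB" "2 \<le> card B" "B - K2 = {y}"
      unfolding shadow_def by blast
    have AH: "A \<in> ?H" and BH: "B \<in> ?H" using A B AA BB by blast+
    \<comment> \<open>\<open>A\<close> and \<open>B\<close> agree off \<open>K\<close>, where both are \<open>{y}\<close>, and both meet \<open>K\<close> as they are not singletons\<close>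
    have "A - ?K = B - ?K" using y A(3) B(3) by blast
    moreover have "A \<inter> ?K \<noteq> {}" "B \<inter> ?K \<noteq> {}"
      using Int_nonempty_if_Diff_singleton[OF A(2,3)] Int_nonempty_if_Diff_singleton[OF B(2,3)]
      by blast+
    ultimately have "(B, A) \<in> ?E'" using hat_ent_agree_off[OF AH BH _ _ _ E(2)] by blast
    moreover have "(A, A) \<in> ?E'" using hat_ent_refl[OF AH E(1)] .
    ultimately have "A \<in> ?E' `` AA \<inter> ?E' `` BB" using A(1) B(1) by blast
    then show "y \<in> \<Union>(?E' `` AA \<inter> ?E' `` BB)" using A(3) by blast
  qed
  moreover have "?E' \<in> hypersym_ent X EE n" unfolding hypersym_ent_eq using E(1) by blast
  with disj have "bounded (\<Union>(?E' `` AA \<inter> ?E' `` BB))"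
    unfolding asymp_disjoint_def by (blast intro: hypersym_bounded_Union)
  ultimately show False using Y bounded_in_subset by blast
qed

lemma asymp_nbhd_self:
  assumes n: "1 \<le> n" and BB: "BB \<subseteq> hypersym_carrier X EE n"
    and big: "bounded (\<Union>{B\<in>BB. 2 \<le> card B})"
  shows "asymp_nbhd (hypersym_carrier X EE n) (hypersym_ent X EE n) BB BB"
  unfolding asymp_nbhd_def
proof
  let ?H = "hypersym_carrier X EE n"
  fix E' assume "E' \<in> hypersym_ent X EE n"
  then obtain E where E: "E \<in> EE" "E' = (?H \<times> ?H) \<inter> hat_ent X EE E"
    unfolding hypersym_ent_eq by blast
  obtain K where K: "bounded K" "E \<subseteq> Id_on X \<union> K \<times> K"
    using entourage_trivial_off_bounded[OF E(1)] .
  \<comment> \<open>a singleton off \<open>K\<close> is \<open>E'\<close>-close only to itself\<close>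
  have "C \<subseteq> K \<union> \<Union>{B\<in>BB. 2 \<le> card B}" if "C \<in> E' `` BB - BB" for C
  proof
    fix c assume "c \<in> C"
    from that E(2) obtain B where B: "B \<in> BB" "(B, C) \<in> hat_ent X EE E" "C \<notin> BB" by blast
    show "c \<in> K \<union> \<Union>{B\<in>BB. 2 \<le> card B}"
    proof (cases "c \<in> K")
      case False
      with \<open>c \<in> C\<close> hat_ent_Diff_subset[OF B(2) K(2)] have "c \<in> B" by blast
      from B(1) BB have "B \<in> ?H" by blast
      then have "finite B" unfolding hypersym_carrier_iff by blast
      have "2 \<le> card B"
      proof (rule ccontr)
        assume "\<not> 2 \<le> card B"
        with \<open>c \<in> B\<close> \<open>finite B\<close> have "B = {c}" using two_le_card_iff by blast
        with B(2) hat_ent_singleton_off[OF _ K(2) False] have "C = B" by blast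
        with B show False by blast
      qed
      with B(1) \<open>c \<in> B\<close> show ?thesis by blast
    qed blast
  qed
  then have "\<Union>(E' `` BB - BB) \<subseteq> K \<union> \<Union>{B\<in>BB. 2 \<le> card B}" by blast
  with K(1) big have "bounded (\<Union>(E' `` BB - BB))" using bounded_Un bounded_in_subset by blast
  moreover have "E' `` BB - BB \<subseteq> ?H" using E(2) by blast
  ultimately show "hypersym_bounded n (E' `` BB - BB)"
    using hypersym_boundedI[OF carrier_nonempty n] by blast
qed

theorem hypersym_power_normal:
  assumes n: "1 \<le> n"
  shows "normal_ballean (hypersym_carrier X EE n) (hypersym_ent X EE n)"
proof -
  let ?H = "hypersym_carrier X EE n"
  have separated: "\<exists>U V. U \<subseteq> ?H \<and> V \<subseteq> ?H \<and> asymp_nbhd ?H (hypersym_ent X EE n) U AA \<and>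
      asymp_nbhd ?H (hypersym_ent X EE n) V BB \<and> U \<inter> V = {}"
    if BB: "BB \<subseteq> ?H" and disj: "asymp_disjoint ?H (hypersym_ent X EE n) AA BB"
      and big: "bounded (\<Union>{B\<in>BB. 2 \<le> card B})" for AA BB
  proof (rule exI[of _ "?H - BB"], rule exI[of _ BB], intro conjI)
    show "asymp_nbhd ?H (hypersym_ent X EE n) (?H - BB) AA"
      using hypersym_ent_subset_refl[OF _ BB] disj by (rule asymp_nbhd_complement)
    show "asymp_nbhd ?H (hypersym_ent X EE n) BB BB" by (rule asymp_nbhd_self[OF n BB big])
  qed (use BB in auto)
  show ?thesis
    unfolding normal_ballean_def
  proof (intro allI impI)
    fix AA BB assume AA: "AA \<subseteq> ?H" and BB: "BB \<subseteq> ?H"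
      and disj: "asymp_disjoint ?H (hypersym_ent X EE n) AA BB"
    from non_singletons_bounded[OF AA BB disj]
    show "\<exists>U V. U \<subseteq> ?H \<and> V \<subseteq> ?H \<and> asymp_nbhd ?H (hypersym_ent X EE n) U AA \<and>
        asymp_nbhd ?H (hypersym_ent X EE n) V BB \<and> U \<inter> V = {}"
    proof
      assume "bounded (\<Union>{A\<in>AA. 2 \<le> card A})"
      moreover have "asymp_disjoint ?H (hypersym_ent X EE n) BB AA"
        using disj by (rule asymp_disjoint_commute[THEN iffD1])
      ultimately obtain U V where "U \<subseteq> ?H" "V \<subseteq> ?H" "asymp_nbhd ?H (hypersym_ent X EE n) U BB"
        "asymp_nbhd ?H (hypersym_ent X EE n) V AA" "U \<inter> V = {}"
        using separated[OF AA, of BB] by auto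
      then show ?thesis by blast
    next
      assume "bounded (\<Union>{B\<in>BB. 2 \<le> card B})"
      then show ?thesis by (rule separated[OF BB disj])
    qed
  qed
qed

end

theorem theorem1p10:
  fixes X :: "'a set" and EE :: "('a \<times> 'a) set set" and n :: nat
  assumes "ballean X EE"
    and "ultradiscrete X EE"
    and "n \<ge> 2"
  shows "\<not> normal_ballean (power_carrier X n) (power_ent X EE n)
         \<and> normal_ballean (hypersym_carrier X EE n) (hypersym_ent X EE n)"
proof -
  interpret ultradiscrete_space X EE
    using assms(1,2) by unfold_locales
  show ?thesis using power_not_normal[OF assms(3)] hypersym_power_normal assms(3) by simp
qed

end
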